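(* For all integers $n$ and $\alpha$ with $n<\alpha\le 2^{n-1}+1$, there exists a minimal $n$-state nondeterministic finite automaton accepting a prefix-free language whose equivalent minimal deterministic finite automaton has exactly $\alpha$ states. The same holds with "prefix-free" replaced by "suffix-free".
   Context: NFAs have a single initial state and a transition function $\delta:Q\times\Sigma\to 2^Q$ that may map to the empty set (no sink state is needed or counted); DFAs are complete, so a sink state is counted. A minimal $n$-state NFA is an NFA with $n$ states such that no NFA with fewer states accepts the same language. With $\Sigma^+=\Sigma^*\setminus\{\lambda\}$: $L$ is prefix-free if $y\in L$ implies $yz\notin L$ for all $z\in\Sigma^+$; suffix-free if $y\in L$ implies $xy\notin L$ for all $x\in\Sigma^+$. *)

theory Defs
  imports Main
begin

record 'a nfa =
  nstates :: "nat set"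
  ninit :: nat
  ndelta :: "nat \<Rightarrow> 'a \<Rightarrow> nat set"
  nfinal :: "nat set"

record 'a dfa =
  dstates :: "nat set"
  dinit :: nat
  ddelta :: "nat \<Rightarrow> 'a \<Rightarrow> nat"
  dfinal :: "nat set"

text \<open>NFA: single initial state, transitions may be empty (no sink needed).\<close>
definition is_nfa :: "'a set \<Rightarrow> 'a nfa \<Rightarrow> bool" where
  "is_nfa Alph A \<longleftrightarrow> finite (nstates A) \<and> ninit A \<in> nstates A \<and>
     nfinal A \<subseteq> nstates A \<and>
     (\<forall>q\<in>nstates A. \<forall>a\<in>Alph. ndelta A q a \<subseteq> nstates A)"

fun nfa_reach :: "(nat \<Rightarrow> 'a \<Rightarrow> nat set) \<Rightarrow> nat set \<Rightarrow> 'a list \<Rightarrow> nat set" where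
  "nfa_reach d S [] = S"
| "nfa_reach d S (a # w) = nfa_reach d (\<Union>q\<in>S. d q a) w"

definition nfa_lang :: "'a set \<Rightarrow> 'a nfa \<Rightarrow> 'a list set" where
  "nfa_lang Alph A = {w \<in> lists Alph. nfa_reach (ndelta A) {ninit A} w \<inter> nfinal A \<noteq> {}}"

text \<open>DFA: complete (every state has a transition on every letter), so a sink counts.\<close>
definition is_dfa :: "'a set \<Rightarrow> 'a dfa \<Rightarrow> bool" where
  "is_dfa Alph D \<longleftrightarrow> finite (dstates D) \<and> dinit D \<in> dstates D \<and>
     dfinal D \<subseteq> dstates D \<and>
     (\<forall>q\<in>dstates D. \<forall>a\<in>Alph. ddelta D q a \<in> dstates D)"

definition dfa_lang :: "'a set \<Rightarrow> 'a dfa \<Rightarrow> 'a list set" where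
  "dfa_lang Alph D = {w \<in> lists Alph. foldl (ddelta D) (dinit D) w \<in> dfinal D}"

definition nfa_sc :: "'a set \<Rightarrow> 'a list set \<Rightarrow> nat" where
  "nfa_sc Alph L = (LEAST n. \<exists>A. is_nfa Alph A \<and> card (nstates A) = n \<and> nfa_lang Alph A = L)"

definition dfa_sc :: "'a set \<Rightarrow> 'a list set \<Rightarrow> nat" where
  "dfa_sc Alph L = (LEAST n. \<exists>D. is_dfa Alph D \<and> card (dstates D) = n \<and> dfa_lang Alph D = L)"

definition minimal_nfa :: "'a set \<Rightarrow> 'a nfa \<Rightarrow> bool" where
  "minimal_nfa Alph A \<longleftrightarrow> is_nfa Alph A \<and>
     (\<forall>B. is_nfa Alph B \<and> nfa_lang Alph B = nfa_lang Alph A \<longrightarrow> card (nstates A) \<le> card (nstates B))"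

definition prefix_free :: "'a list set \<Rightarrow> bool" where
  "prefix_free L \<longleftrightarrow> (\<forall>y\<in>L. \<forall>z. z \<noteq> [] \<longrightarrow> y @ z \<notin> L)"

definition suffix_free :: "'a list set \<Rightarrow> bool" where
  "suffix_free L \<longleftrightarrow> (\<forall>y\<in>L. \<forall>x. x \<noteq> [] \<longrightarrow> x @ y \<notin> L)"

end

theory Submission
  imports Defs
begin

(* Put m = n - 1 and r = alpha - 2, so that m <= r <= 2^m - 1. The witness NFA has states 0..m,
   initial state 0 and final state m. A family F of r nonempty sets of states containing enough
   singletons is enumerated as g 0, ..., g (r - 1); the letter m + k leads from state 0 to g k,
   and certain states q < m lead to m on their own letter q. The subsets reachable in the subset
   construction are then exactly F together with {0}, {m} and the empty set, r + 2 in all, and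
   every state q is singled out by a word accepted from q and from no other state. Hence these
   subsets are pairwise distinguishable, so the minimal DFA has alpha states, and the pairs
   (word reaching {q}, word singling out q) form a fooling set of size n, so the NFA is minimal.
   Taking F over the states 0..m-1 makes the final state a dead end, so the language is
   prefix-free. Taking F over 1..m and letting only the states 1..m-1 use their own letters, no
   transition enters state 0 and the letters leaving state 0 label no other transition, so the
   language is suffix-free. *)

lemma nfa_reach_append: "nfa_reach d S (u @ v) = nfa_reach d (nfa_reach d S u) v"
  by (induction u arbitrary: S) auto

lemma nfa_reach_empty [simp]: "nfa_reach d {} w = {}"
  by (induction w) auto

lemma nfa_reach_Union: "nfa_reach d S w = (\<Union>q\<in>S. nfa_reach d {q} w)"
proof (induction w arbitrary: S)
  case (Cons a w)
  have "nfa_reach d S (a # w) = (\<Union>p\<in>(\<Union>q\<in>S. d q a). nfa_reach d {p} w)"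
    using Cons.IH[of "\<Union>q\<in>S. d q a"] by simp
  also have "\<dots> = (\<Union>q\<in>S. nfa_reach d (d q a) w)"
    by (subst (2) Cons.IH) blast
  finally show ?case by simp
qed simp

lemma nfa_reach_meets_iff_mem:
  assumes "S \<subseteq> Q" and "\<forall>p\<in>Q. (nfa_reach d {p} z \<inter> F \<noteq> {}) = (p = q)"
  shows "(nfa_reach d S z \<inter> F \<noteq> {}) = (q \<in> S)"
proof -
  have "(nfa_reach d S z \<inter> F \<noteq> {}) = (\<exists>p\<in>S. nfa_reach d {p} z \<inter> F \<noteq> {})"
    by (subst nfa_reach_Union) blast
  also have "\<dots> = (q \<in> S)" using assms by (metis subsetD)
  finally show ?thesis .
qed

lemma nfa_reach_avoids:
  assumes "\<And>q a. p \<notin> d q a" and "w \<noteq> []"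
  shows "p \<notin> nfa_reach d S w"
proof -
  obtain w' a where "w = w' @ [a]" using assms(2) by (cases w rule: rev_cases) auto
  then show ?thesis using assms(1) by (simp add: nfa_reach_append)
qed

lemma nfa_reach_subset_nstates:
  assumes "is_nfa Alph A" and "S \<subseteq> nstates A" and "w \<in> lists Alph"
  shows "nfa_reach (ndelta A) S w \<subseteq> nstates A"
  using assms(2,3)
proof (induction w arbitrary: S)
  case (Cons a w)
  have "a \<in> Alph" and "w \<in> lists Alph"
    using Cons.prems(2) by auto
  moreover have "(\<Union>q\<in>S. ndelta A q a) \<subseteq> nstates A"
    using assms(1) Cons.prems(1) \<open>a \<in> Alph\<close> unfolding is_nfa_def by blast
  ultimately show ?case using Cons.IH by simp
qed simp

lemma nfa_reach_in_closed_family: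
  assumes closed: "\<And>S a. S \<in> R \<Longrightarrow> a \<in> Alph \<Longrightarrow> nfa_reach d S [a] \<in> R"
  shows "S \<in> R \<Longrightarrow> w \<in> lists Alph \<Longrightarrow> nfa_reach d S w \<in> R"
proof (induction w arbitrary: S)
  case (Cons a w)
  then have "nfa_reach d S [a] \<in> R" using closed by simp
  with Cons show ?case by simp
qed simp

lemma append_in_nfa_lang_iff:
  assumes "u \<in> lists Alph" and "v \<in> lists Alph"
  shows "u @ v \<in> nfa_lang Alph A \<longleftrightarrow>
    nfa_reach (ndelta A) (nfa_reach (ndelta A) {ninit A} u) v \<inter> nfinal A \<noteq> {}"
  using assms by (simp add: nfa_lang_def nfa_reach_append)

lemma card_le_nstates_if_fooling_set:
  fixes x y :: "'i \<Rightarrow> 'a list"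
  assumes B: "is_nfa Alph B"
    and mem: "\<And>i. i \<in> I \<Longrightarrow> x i @ y i \<in> nfa_lang Alph B"
    and fooling: "\<And>i j. i \<in> I \<Longrightarrow> j \<in> I \<Longrightarrow> i \<noteq> j \<Longrightarrow>
      x i @ y j \<notin> nfa_lang Alph B \<or> x j @ y i \<notin> nfa_lang Alph B"
  shows "card I \<le> card (nstates B)"
proof -
  let ?reach = "nfa_reach (ndelta B)"
  have words: "x i \<in> lists Alph" "y i \<in> lists Alph" if "i \<in> I" for i
    using mem[OF that] by (auto simp: nfa_lang_def)
  have "\<exists>q. q \<in> ?reach {ninit B} (x i) \<and> ?reach {q} (y i) \<inter> nfinal B \<noteq> {}" if "i \<in> I" for i
  proof -
    have "?reach (?reach {ninit B} (x i)) (y i) \<inter> nfinal B \<noteq> {}"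
      using mem[OF that] words[OF that] by (simp add: append_in_nfa_lang_iff)
    then show ?thesis
      by (subst (asm) nfa_reach_Union) blast
  qed
  then obtain q where q: "\<And>i. i \<in> I \<Longrightarrow>
      q i \<in> ?reach {ninit B} (x i) \<and> ?reach {q i} (y i) \<inter> nfinal B \<noteq> {}"
    by metis
  have cross: "x i @ y j \<in> nfa_lang Alph B" if "i \<in> I" "j \<in> I" "q i = q j" for i j
  proof -
    have "?reach {q i} (y j) \<subseteq> ?reach (?reach {ninit B} (x i)) (y j)"
      using q[OF that(1)] by (subst (2) nfa_reach_Union) blast
    moreover have "?reach {q i} (y j) \<inter> nfinal B \<noteq> {}"
      using q[OF that(2)] that(3) by simp
    ultimately show ?thesis
      using words that by (auto simp: append_in_nfa_lang_iff)
  qed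
  have "inj_on q I"
  proof (rule inj_onI, rule ccontr)
    fix i j assume "i \<in> I" "j \<in> I" "q i = q j" "i \<noteq> j"
    then show False using cross[of i j] cross[of j i] fooling[of i j] by auto
  qed
  moreover have "q ` I \<subseteq> nstates B"
  proof (rule image_subsetI)
    fix i assume "i \<in> I"
    have "{ninit B} \<subseteq> nstates B" using B by (simp add: is_nfa_def)
    with \<open>i \<in> I\<close> show "q i \<in> nstates B"
      using q nfa_reach_subset_nstates[OF B _ words(1)] by blast
  qed
  moreover have "finite (nstates B)"
    using B by (simp add: is_nfa_def)
  ultimately show ?thesis
    by (simp add: card_inj_on_le)
qed

lemma minimal_nfa_if_states_reachable_and_separable:
  assumes A: "is_nfa Alph A"
    and reach: "\<And>q. q \<in> nstates A \<Longrightarrow> \<exists>u\<in>lists Alph. nfa_reach (ndelta A) {ninit A} u = {q}"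
    and separate: "\<And>q. q \<in> nstates A \<Longrightarrow> \<exists>z\<in>lists Alph.
      \<forall>p\<in>nstates A. (nfa_reach (ndelta A) {p} z \<inter> nfinal A \<noteq> {}) = (p = q)"
  shows "minimal_nfa Alph A"
proof -
  obtain x where x: "\<And>q. q \<in> nstates A \<Longrightarrow>
      x q \<in> lists Alph \<and> nfa_reach (ndelta A) {ninit A} (x q) = {q}"
    using reach by metis
  obtain y where y: "\<And>q. q \<in> nstates A \<Longrightarrow> y q \<in> lists Alph \<and>
      (\<forall>p\<in>nstates A. (nfa_reach (ndelta A) {p} (y q) \<inter> nfinal A \<noteq> {}) = (p = q))"
    using separate by metis
  have xy: "x p @ y q \<in> nfa_lang Alph A \<longleftrightarrow> p = q"
    if "p \<in> nstates A" "q \<in> nstates A" for p q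
    using x y that by (simp add: append_in_nfa_lang_iff)
  have "card (nstates A) \<le> card (nstates B)"
    if "is_nfa Alph B" "nfa_lang Alph B = nfa_lang Alph A" for B
    by (rule card_le_nstates_if_fooling_set[where x = x and y = y]) (use that xy in auto)
  with A show ?thesis
    by (simp add: minimal_nfa_def)
qed

lemma foldl_ddelta_in_dstates:
  assumes "is_dfa Alph D" and "q \<in> dstates D" and "w \<in> lists Alph"
  shows "foldl (ddelta D) q w \<in> dstates D"
  using assms(2,3) by (induction w arbitrary: q) (use assms(1) in \<open>auto simp: is_dfa_def\<close>)

lemma card_le_dstates_if_distinguishable:
  assumes D: "is_dfa Alph D"
    and words: "\<And>i. i \<in> I \<Longrightarrow> u i \<in> lists Alph"
    and distinct: "\<And>i j. i \<in> I \<Longrightarrow> j \<in> I \<Longrightarrow> i \<noteq> j \<Longrightarrow>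
      \<exists>z\<in>lists Alph. (u i @ z \<in> dfa_lang Alph D) \<noteq> (u j @ z \<in> dfa_lang Alph D)"
  shows "card I \<le> card (dstates D)"
proof -
  let ?run = "\<lambda>i. foldl (ddelta D) (dinit D) (u i)"
  have "inj_on ?run I"
  proof (rule inj_onI, rule ccontr)
    fix i j assume "i \<in> I" "j \<in> I" "?run i = ?run j" "i \<noteq> j"
    then show False
      using distinct[of i j] words by (auto simp: dfa_lang_def)
  qed
  moreover have "?run ` I \<subseteq> dstates D"
    using foldl_ddelta_in_dstates[OF D] D words by (auto simp: is_dfa_def)
  moreover have "finite (dstates D)"
    using D by (simp add: is_dfa_def)
  ultimately show ?thesis
    by (simp add: card_inj_on_le)
qed

lemma subset_construction_on_closed_family:
  assumes fin: "finite R" and init: "{ninit A} \<in> R"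
    and closed: "\<And>S a. S \<in> R \<Longrightarrow> a \<in> Alph \<Longrightarrow> nfa_reach (ndelta A) S [a] \<in> R"
  shows "\<exists>D. is_dfa Alph D \<and> card (dstates D) = card R \<and> dfa_lang Alph D = nfa_lang Alph A"
proof -
  let ?reach = "nfa_reach (ndelta A)"
  obtain h where h: "bij_betw h R {0..<card R}"
    using ex_bij_betw_finite_nat[OF fin] by blast
  let ?set = "inv_into R h"
  have set_h: "?set (h S) = S" if "S \<in> R" for S
    using h that by (simp add: bij_betw_def inv_into_f_f)
  have h_in: "h S \<in> {0..<card R}" if "S \<in> R" for S
    using bij_betwE[OF h] that by blast
  have set_in: "?set q \<in> R" if "q \<in> {0..<card R}" for q
    using h that by (metis bij_betw_def inv_into_into)
  define D where "D = \<lparr>dstates = {0..<card R}, dinit = h {ninit A},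
      ddelta = (\<lambda>q a. h (?reach (?set q) [a])), dfinal = h ` {S \<in> R. S \<inter> nfinal A \<noteq> {}}\<rparr>"
  have "is_dfa Alph D"
    using h_in init closed set_in by (auto simp: is_dfa_def D_def)
  moreover have "card (dstates D) = card R"
    by (simp add: D_def)
  moreover have run: "foldl (ddelta D) (h S) w = h (?reach S w)"
    if "S \<in> R" "w \<in> lists Alph" for S w
    using that
  proof (induction w arbitrary: S)
    case (Cons a w)
    then have "ddelta D (h S) a = h (?reach S [a])" and "?reach S [a] \<in> R"
      using set_h closed by (simp_all add: D_def)
    with Cons show ?case by simp
  qed simp
  have "dfa_lang Alph D = nfa_lang Alph A"
  proof (intro set_eqI)
    fix w
    have "foldl (ddelta D) (dinit D) w \<in> dfinal D \<longleftrightarrow> ?reach {ninit A} w \<inter> nfinal A \<noteq> {}"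
      if "w \<in> lists Alph"
      using run[OF init that] nfa_reach_in_closed_family[OF closed init that]
        bij_betw_imp_inj_on[OF h] by (auto simp: D_def dest: inj_onD)
    then show "w \<in> dfa_lang Alph D \<longleftrightarrow> w \<in> nfa_lang Alph A"
      by (auto simp: dfa_lang_def nfa_lang_def)
  qed
  ultimately show ?thesis by blast
qed

lemma dfa_sc_eq_card_reachable_family:
  assumes fin: "finite R" and R_sub: "R \<subseteq> Pow (nstates A)" and init: "{ninit A} \<in> R"
    and closed: "\<And>S a. S \<in> R \<Longrightarrow> a \<in> Alph \<Longrightarrow> nfa_reach (ndelta A) S [a] \<in> R"
    and reach: "\<And>S. S \<in> R \<Longrightarrow> \<exists>u\<in>lists Alph. nfa_reach (ndelta A) {ninit A} u = S"
    and separate: "\<And>q. q \<in> nstates A \<Longrightarrow> \<exists>z\<in>lists Alph.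
      \<forall>p\<in>nstates A. (nfa_reach (ndelta A) {p} z \<inter> nfinal A \<noteq> {}) = (p = q)"
  shows "dfa_sc Alph (nfa_lang Alph A) = card R"
proof -
  let ?L = "nfa_lang Alph A"
  obtain u where u: "\<And>S. S \<in> R \<Longrightarrow> u S \<in> lists Alph \<and> nfa_reach (ndelta A) {ninit A} (u S) = S"
    using reach by metis
  have distinguishable: "\<exists>z\<in>lists Alph. (u S @ z \<in> ?L) \<noteq> (u T @ z \<in> ?L)"
    if S: "S \<in> R" and T: "T \<in> R" and "S \<noteq> T" for S T
  proof -
    obtain q where q: "q \<in> nstates A" "(q \<in> S) \<noteq> (q \<in> T)"
      using S T \<open>S \<noteq> T\<close> R_sub by blast
    then obtain z where z: "z \<in> lists Alph"
      "\<forall>p\<in>nstates A. (nfa_reach (ndelta A) {p} z \<inter> nfinal A \<noteq> {}) = (p = q)"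
      using separate by blast
    have "(u V @ z \<in> ?L) = (q \<in> V)" if "V \<in> R" for V
    proof -
      have "V \<subseteq> nstates A" using that R_sub by blast
      then have "(nfa_reach (ndelta A) V z \<inter> nfinal A \<noteq> {}) = (q \<in> V)"
        using z(2) by (rule nfa_reach_meets_iff_mem)
      with u[OF that] z(1) show ?thesis by (simp add: append_in_nfa_lang_iff)
    qed
    then have "(u S @ z \<in> ?L) \<noteq> (u T @ z \<in> ?L)"
      using q(2) S T by simp
    with z(1) show ?thesis by blast
  qed
  have "card R \<le> card (dstates D)" if "is_dfa Alph D" "dfa_lang Alph D = ?L" for D
  proof (rule card_le_dstates_if_distinguishable[OF that(1)])
    show "u S \<in> lists Alph" if "S \<in> R" for S
      using u[OF that] by blast
    show "\<exists>z\<in>lists Alph. (u S @ z \<in> dfa_lang Alph D) \<noteq> (u T @ z \<in> dfa_lang Alph D)"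
      if "S \<in> R" "T \<in> R" "S \<noteq> T" for S T
      using distinguishable[OF that] \<open>dfa_lang Alph D = ?L\<close> by simp
  qed
  moreover obtain D where "is_dfa Alph D" "card (dstates D) = card R" "dfa_lang Alph D = ?L"
    using subset_construction_on_closed_family[OF fin init closed] by blast
  ultimately show ?thesis
    unfolding dfa_sc_def by (intro Least_equality) auto
qed

lemma prefix_free_nfa_langI:
  assumes accepting: "\<And>w. w \<in> lists Alph \<Longrightarrow> nfa_reach (ndelta A) {ninit A} w \<inter> nfinal A \<noteq> {} \<Longrightarrow>
      nfa_reach (ndelta A) {ninit A} w \<subseteq> nfinal A"
    and final_dead: "\<And>q a. q \<in> nfinal A \<Longrightarrow> ndelta A q a = {}"
  shows "prefix_free (nfa_lang Alph A)"
  unfolding prefix_free_def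
proof (intro ballI allI impI notI)
  fix y z assume y: "y \<in> nfa_lang Alph A" and "z \<noteq> []" and yz: "y @ z \<in> nfa_lang Alph A"
  obtain a z' where z: "z = a # z'" using \<open>z \<noteq> []\<close> by (cases z) auto
  have "nfa_reach (ndelta A) {ninit A} y \<subseteq> nfinal A"
    using y accepting by (simp add: nfa_lang_def)
  then have "(\<Union>q\<in>nfa_reach (ndelta A) {ninit A} y. ndelta A q a) = {}"
    using final_dead by blast
  then have "nfa_reach (ndelta A) {ninit A} (y @ z) = {}"
    by (simp add: nfa_reach_append z)
  with yz show False by (simp add: nfa_lang_def)
qed

lemma suffix_free_nfa_langI:
  assumes init_unreachable: "\<And>q a. ninit A \<notin> ndelta A q a"
    and init_letters_private:
      "\<And>q a. ndelta A (ninit A) a \<noteq> {} \<Longrightarrow> q \<noteq> ninit A \<Longrightarrow> ndelta A q a = {}"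
    and final_init_dead: "\<And>a. ninit A \<in> nfinal A \<Longrightarrow> ndelta A (ninit A) a = {}"
  shows "suffix_free (nfa_lang Alph A)"
  unfolding suffix_free_def
proof (intro ballI allI impI notI)
  let ?reach = "nfa_reach (ndelta A)"
  fix y x assume y: "y \<in> nfa_lang Alph A" and "x \<noteq> []" and xy: "x @ y \<in> nfa_lang Alph A"
  obtain a x' where x: "x = a # x'" using \<open>x \<noteq> []\<close> by (cases x) auto
  have init_not_reached: "ninit A \<notin> ?reach {ninit A} x"
    using init_unreachable \<open>x \<noteq> []\<close> by (rule nfa_reach_avoids)
  show False
  proof (cases y)
    case Nil
    then have "ndelta A (ninit A) a = {}"
      using y final_init_dead by (simp add: nfa_lang_def)
    with xy Nil x show False by (simp add: nfa_lang_def)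
  next
    case (Cons b y')
    then have "ndelta A (ninit A) b \<noteq> {}"
      using y by (auto simp: nfa_lang_def)
    then have "\<forall>q\<in>?reach {ninit A} x. ndelta A q b = {}"
      using init_letters_private init_not_reached by metis
    then have "?reach {ninit A} (x @ y) = {}"
      by (simp add: nfa_reach_append Cons)
    with xy show False by (simp add: nfa_lang_def)
  qed
qed

lemma exists_nonempty_subsets_containing_singletons:
  assumes "finite U" and "card U \<le> r" and "r \<le> 2 ^ card U - 1"
  shows "\<exists>F. (\<lambda>q. {q}) ` U \<subseteq> F \<and> F \<subseteq> Pow U - {{}} \<and> card F = r"
proof -
  let ?singletons = "(\<lambda>q. {q}) ` U"
  have card_singletons: "card ?singletons = card U"
    by (rule card_image) (simp add: inj_on_def)
  have "card (Pow U - {{}} - ?singletons) = 2 ^ card U - 1 - card U"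
    using \<open>finite U\<close> card_singletons by (subst card_Diff_subset) (auto simp: card_Pow)
  then obtain Q where Q: "Q \<subseteq> Pow U - {{}} - ?singletons" "card Q = r - card U"
    using assms(3) by (metis diff_le_mono obtain_subset_with_card_n)
  have "finite Q"
    using Q(1) \<open>finite U\<close> by (meson finite_Diff finite_Pow_iff finite_subset)
  then have "card (?singletons \<union> Q) = r"
    using Q \<open>finite U\<close> card_singletons assms(2) by (subst card_Un_disjoint) auto
  moreover have "?singletons \<union> Q \<subseteq> Pow U - {{}}"
    using Q(1) by blast
  ultimately show ?thesis by blast
qed

(* Over the alphabet {..m + r}; the letter m + r labels no transition and only serves to make
   the empty set reachable. *)
definition witness_nfa :: "nat \<Rightarrow> nat \<Rightarrow> nat set \<Rightarrow> (nat \<Rightarrow> nat set) \<Rightarrow> nat nfa" where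
  "witness_nfa m r P g = \<lparr>nstates = {..m}, ninit = 0,
     ndelta = (\<lambda>q a. if q = 0 \<and> m \<le> a \<and> a < m + r then g (a - m)
                     else if q \<in> P \<and> a = q then {m} else {}),
     nfinal = {m}\<rparr>"

definition witness_family :: "nat \<Rightarrow> nat \<Rightarrow> (nat \<Rightarrow> nat set) \<Rightarrow> nat set set" where
  "witness_family m r g = insert {0} (insert {m} (insert {} (g ` {..<r})))"

lemma witness_nfa_step:
  assumes "P \<subseteq> {..<m}"
  shows "nfa_reach (ndelta (witness_nfa m r P g)) S [a] =
    (if m \<le> a \<and> a < m + r then (if 0 \<in> S then g (a - m) else {})
     else if a \<in> S \<inter> P then {m} else {})"
  using assms by (auto simp: witness_nfa_def)

lemma witness_nfa_is_nfa:
  assumes "g ` {..<r} \<subseteq> Pow {..m}"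
  shows "is_nfa {..m + r} (witness_nfa m r P g)"
proof -
  have "g (a - m) \<subseteq> {..m}" if "m \<le> a" "a < m + r" for a
  proof -
    have "a - m < r" using that by arith
    with assms show ?thesis by (auto simp: image_subset_iff)
  qed
  then show ?thesis by (auto simp: is_nfa_def witness_nfa_def)
qed

lemma witness_family_closed:
  assumes "P \<subseteq> {..<m}" and "S \<in> witness_family m r g"
  shows "nfa_reach (ndelta (witness_nfa m r P g)) S [a] \<in> witness_family m r g"
proof -
  have "m \<le> a \<Longrightarrow> a < m + r \<Longrightarrow> g (a - m) \<in> g ` {..<r}"
    by (intro imageI) (simp add: less_diff_conv2)
  then show ?thesis
    unfolding witness_nfa_step[OF assms(1)] witness_family_def by auto
qed

lemma witness_nfa_minimal_and_dfa_sc: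
  assumes P: "P \<subseteq> {..<m}" and g: "g ` {..<r} \<subseteq> Pow {..m}"
    and singletons: "\<And>q. 0 < q \<Longrightarrow> q < m \<Longrightarrow> {q} \<in> g ` {..<r}"
    and testable: "\<And>q. q < m \<Longrightarrow> q \<in> P \<or> q = 0 \<and> {m} \<in> g ` {..<r}"
    \<comment> \<open>state q is singled out by its letter q, or (if q = 0) by a letter leading to {m}\<close>
  shows "minimal_nfa {..m + r} (witness_nfa m r P g) \<and>
    dfa_sc {..m + r} (nfa_lang {..m + r} (witness_nfa m r P g)) = card (witness_family m r g)"
proof -
  let ?A = "witness_nfa m r P g" and ?R = "witness_family m r g" and ?Alph = "{..m + r}"
  let ?reach = "nfa_reach (ndelta ?A)"
  have A: "is_nfa ?Alph ?A"
    using g by (rule witness_nfa_is_nfa)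
  have states: "nstates ?A = {..m}" and init: "ninit ?A = 0" and final: "nfinal ?A = {m}"
    by (simp_all add: witness_nfa_def)
  have delta: "ndelta ?A q a = (if q = 0 \<and> m \<le> a \<and> a < m + r then g (a - m)
      else if q \<in> P \<and> a = q then {m} else {})" for q a
    by (simp add: witness_nfa_def)
  have reach_image: "?reach {0} [m + k] = g k" if "k < r" for k
    using that by (simp add: delta)
  have reach_m: "\<exists>u\<in>lists ?Alph. ?reach {0} u = {m}"
  proof (cases "m = 0")
    case True
    then show ?thesis by (intro bexI[of _ "[]"]) auto
  next
    case False
    then consider "0 \<in> P" | k where "k < r" "g k = {m}"
      using testable[of 0] by blast
    then show ?thesis
    proof cases
      case 1
      with False show ?thesis by (intro bexI[of _ "[0]"]) (auto simp: delta)
    next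
      case 2
      then show ?thesis using reach_image by (intro bexI[of _ "[m + k]"]) auto
    qed
  qed
  have reach: "\<exists>u\<in>lists ?Alph. ?reach {ninit ?A} u = S" if S: "S \<in> ?R" for S
  proof -
    consider "S = {0}" | "S = {m}" | "S = {}" | k where "k < r" "S = g k"
      using S by (auto simp: witness_family_def)
    then show ?thesis
    proof cases
      case 1
      then show ?thesis by (intro bexI[of _ "[]"]) (auto simp: init)
    next
      case 2
      then show ?thesis using reach_m by (simp add: init)
    next
      case 3
      then show ?thesis using P by (intro bexI[of _ "[m + r]"]) (auto simp: init delta)
    next
      case 4
      then show ?thesis using reach_image by (intro bexI[of _ "[m + k]"]) (auto simp: init)
    qed
  qed
  have singleton_in_family: "{q} \<in> ?R" if "q \<le> m" for q
    using that singletons[of q] by (cases "q = 0 \<or> q = m") (auto simp: witness_family_def)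
  have separate: "\<exists>z\<in>lists ?Alph. \<forall>p\<in>nstates ?A. (?reach {p} z \<inter> nfinal ?A \<noteq> {}) = (p = q)"
    if q: "q \<in> nstates ?A" for q
  proof -
    consider "q = m" | "q < m" "q \<in> P" | k where "q = 0" "k < r" "g k = {m}"
      using q testable[of q] by (force simp: states)
    then show ?thesis
    proof cases
      case 1
      then show ?thesis by (intro bexI[of _ "[]"]) (auto simp: final)
    next
      case 2
      then show ?thesis by (intro bexI[of _ "[q]"]) (auto simp: final delta)
    next
      case 3
      then show ?thesis using P by (intro bexI[of _ "[m + k]"]) (auto simp: final delta)
    qed
  qed
  have "minimal_nfa ?Alph ?A"
  proof (rule minimal_nfa_if_states_reachable_and_separable[OF A _ separate])
    show "\<exists>u\<in>lists ?Alph. ?reach {ninit ?A} u = {q}" if "q \<in> nstates ?A" for q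
      using that singleton_in_family reach by (simp add: states)
  qed
  moreover have "dfa_sc ?Alph (nfa_lang ?Alph ?A) = card ?R"
  proof (rule dfa_sc_eq_card_reachable_family[OF _ _ _ _ reach separate])
    show "finite ?R" by (simp add: witness_family_def)
    show "?R \<subseteq> Pow (nstates ?A)" using g by (auto simp: witness_family_def states)
    show "{ninit ?A} \<in> ?R" by (simp add: witness_family_def init)
    show "?reach S [a] \<in> ?R" if "S \<in> ?R" for S a
      using P that by (rule witness_family_closed)
  qed
  ultimately show ?thesis by blast
qed

lemma exists_minimal_prefix_free_nfa:
  assumes "m \<le> r" and "r \<le> 2 ^ m - 1"
  shows "\<exists>A. minimal_nfa {..m + r} A \<and> card (nstates A) = m + 1 \<and>
    prefix_free (nfa_lang {..m + r} A) \<and> dfa_sc {..m + r} (nfa_lang {..m + r} A) = r + 2"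
proof -
  obtain F where F: "(\<lambda>q. {q}) ` {..<m} \<subseteq> F" "F \<subseteq> Pow {..<m} - {{}}" "card F = r"
    using exists_nonempty_subsets_containing_singletons[of "{..<m}" r] assms by auto
  have "finite F"
    using F(2) by (rule finite_subset) simp
  then obtain g where "bij_betw g {..<r} F"
    using F(3) ex_bij_betw_nat_finite by (metis atLeast0LessThan)
  then have image: "g ` {..<r} = F"
    by (simp add: bij_betw_def)
  have "Pow {..<m} \<subseteq> Pow {..m}" by auto
  with F(2) have F_states: "F \<subseteq> Pow {..m}" by blast
  let ?A = "witness_nfa m r {..<m} g"
  have complexity: "minimal_nfa {..m + r} ?A \<and>
      dfa_sc {..m + r} (nfa_lang {..m + r} ?A) = card (witness_family m r g)"
  proof (rule witness_nfa_minimal_and_dfa_sc)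
    show "g ` {..<r} \<subseteq> Pow {..m}" using F_states image by simp
    show "{q} \<in> g ` {..<r}" if "0 < q" "q < m" for q
      using F(1) image that by auto
    show "q \<in> {..<m} \<or> q = 0 \<and> {m} \<in> g ` {..<r}" if "q < m" for q
      using that by simp
  qed simp
  have "witness_family m r g = insert {m} (insert {} F)"
    using F(1) image by (cases "m = 0") (auto simp: witness_family_def)
  moreover have "{m} \<notin> F" and "{} \<notin> F"
    using F(2) by auto
  ultimately have card_family: "card (witness_family m r g) = r + 2"
    using F(3) \<open>finite F\<close> by simp
  have "prefix_free (nfa_lang {..m + r} ?A)"
  proof (rule prefix_free_nfa_langI)
    fix w
    have "nfa_reach (ndelta ?A) {0} w \<in> witness_family m r g"
      by (rule nfa_reach_in_closed_family[OF witness_family_closed, where Alph = UNIV])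
        (auto simp: witness_family_def)
    then show "nfa_reach (ndelta ?A) {ninit ?A} w \<subseteq> nfinal ?A"
      if "nfa_reach (ndelta ?A) {ninit ?A} w \<inter> nfinal ?A \<noteq> {}"
      using that F(2) image by (auto simp: witness_family_def witness_nfa_def)
  next
    show "ndelta ?A q a = {}" if "q \<in> nfinal ?A" for q a
      using that F(2) image by (auto simp: witness_nfa_def)
  qed
  moreover have "card (nstates ?A) = m + 1"
    by (simp add: witness_nfa_def)
  ultimately show ?thesis
    using complexity card_family by auto
qed

lemma exists_minimal_suffix_free_nfa:
  assumes "m \<le> r" and "r \<le> 2 ^ m - 1"
  shows "\<exists>A. minimal_nfa {..m + r} A \<and> card (nstates A) = m + 1 \<and>
    suffix_free (nfa_lang {..m + r} A) \<and> dfa_sc {..m + r} (nfa_lang {..m + r} A) = r + 2"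
proof -
  obtain F where F: "(\<lambda>q. {q}) ` {1..m} \<subseteq> F" "F \<subseteq> Pow {1..m} - {{}}" "card F = r"
    using exists_nonempty_subsets_containing_singletons[of "{1..m}" r] assms by auto
  have "finite F"
    using F(2) by (rule finite_subset) simp
  then obtain g where "bij_betw g {..<r} F"
    using F(3) ex_bij_betw_nat_finite by (metis atLeast0LessThan)
  then have image: "g ` {..<r} = F"
    by (simp add: bij_betw_def)
  have "Pow {1..m} \<subseteq> Pow {..m}" by auto
  with F(2) have F_states: "F \<subseteq> Pow {..m}" by blast
  have final_in_F: "{m} \<in> F" if "0 < m"
  proof -
    have "m \<in> {1..m}" using that by simp
    then show ?thesis using F(1) by blast
  qed
  let ?A = "witness_nfa m r {1..<m} g"
  have complexity: "minimal_nfa {..m + r} ?A \<and>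
      dfa_sc {..m + r} (nfa_lang {..m + r} ?A) = card (witness_family m r g)"
  proof (rule witness_nfa_minimal_and_dfa_sc)
    show "g ` {..<r} \<subseteq> Pow {..m}" using F_states image by simp
    show "{q} \<in> g ` {..<r}" if "0 < q" "q < m" for q
      using F(1) image that by auto
    show "q \<in> {1..<m} \<or> q = 0 \<and> {m} \<in> g ` {..<r}" if "q < m" for q
      using that image final_in_F by auto
  qed auto
  have "witness_family m r g = insert {0} (insert {} F)"
    using final_in_F image by (cases "m = 0") (auto simp: witness_family_def)
  moreover have "{0} \<notin> F" and "{} \<notin> F"
    using F(2) by auto
  ultimately have card_family: "card (witness_family m r g) = r + 2"
    using F(3) \<open>finite F\<close> by simp
  have targets: "g (a - m) \<subseteq> {1..m}" if "m \<le> a" "a < m + r" for a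
  proof -
    have "g (a - m) \<in> F"
      using that image by (auto simp: less_diff_conv2)
    then show ?thesis using F(2) by blast
  qed
  have "suffix_free (nfa_lang {..m + r} ?A)"
  proof (rule suffix_free_nfa_langI)
    show "ninit ?A \<notin> ndelta ?A q a" for q a
      using targets[of a] by (auto simp: witness_nfa_def subset_iff)
    show "ndelta ?A q a = {}" if "ndelta ?A (ninit ?A) a \<noteq> {}" and "q \<noteq> ninit ?A" for q a
      using that by (auto simp: witness_nfa_def split: if_splits)
    show "ndelta ?A (ninit ?A) a = {}" if "ninit ?A \<in> nfinal ?A" for a
      using that targets[of a] by (auto simp: witness_nfa_def)
  qed
  moreover have "card (nstates ?A) = m + 1"
    by (simp add: witness_nfa_def)
  ultimately show ?thesis
    using complexity card_family by auto
qed

theorem mainTheorem5: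
  fixes n \<alpha> :: nat
  assumes "1 \<le> n" and "n < \<alpha>" and "\<alpha> \<le> 2 ^ (n - 1) + 1"
  shows "(\<exists>(Alph :: nat set) A. finite Alph \<and> minimal_nfa Alph A \<and> card (nstates A) = n \<and>
            prefix_free (nfa_lang Alph A) \<and> dfa_sc Alph (nfa_lang Alph A) = \<alpha>)
       \<and> (\<exists>(Alph :: nat set) A. finite Alph \<and> minimal_nfa Alph A \<and> card (nstates A) = n \<and>
            suffix_free (nfa_lang Alph A) \<and> dfa_sc Alph (nfa_lang Alph A) = \<alpha>)"
proof -
  define m r where "m = n - 1" and "r = \<alpha> - 2"
  have n: "n = m + 1" and \<alpha>: "\<alpha> = r + 2" and bounds: "m \<le> r" "r \<le> 2 ^ m - 1"
    using assms by (simp_all add: m_def r_def)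
  have "finite {..m + r}" by simp
  with exists_minimal_prefix_free_nfa[OF bounds] exists_minimal_suffix_free_nfa[OF bounds] n \<alpha>
  show ?thesis by blast
qed

end
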